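(* Let $X^{(n)}=\{X_1,\dots,X_n\}\subset\mathbb{R}^d$ and $u^{(n)}=\{u_1,\dots,u_n\}\subset\mathbb{R}^d$, and fix $i\in\{1,\dots,n\}$. Then for every $\ell\in\mathbb{N}$ with $\mathrm{TD}^-(u_i;u^{(n)})>\ell/n$, there exists $R>0$ such that $\hat T_{Z^{(n)}}(u_i)\in R\,\mathbb{B}$ for all $Z^{(n)}\in\mathcal{Q}_{\ell,n}$.
   Context: $\mathbb{B}=\{x:\|x\|\leq1\}$. For a set $Z^{(n)}$ of $n$ points, $\hat T_{Z^{(n)}}$ denotes any bijection $T:u^{(n)}\to Z^{(n)}$ minimizing $\frac1n\sum_j\|T(u_j)-u_j\|^2$. $\mathcal{Q}_{\ell,n}$ is the set of all sets $Z^{(n)}$ of $n$ points of $\mathbb{R}^d$ sharing exactly $n-\ell$ elements with $X^{(n)}$. Lower Tukey depth: $\mathrm{TD}^-(u;u^{(n)})=\frac{n+1}{n}-\max_{v\in\mathcal{S}^{d-1}}\frac1n\sum_j\mathbf{1}(\langle v,u_j-u\rangle\geq0)$. *)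

theory Defs
  imports "HOL-Analysis.Analysis"
begin

definition lower_tukey_depth :: "'a::euclidean_space \<Rightarrow> 'a set \<Rightarrow> real" where
  "lower_tukey_depth x U =
     (real (card U) + 1) / real (card U)
     - Max ((\<lambda>v. real (card {w \<in> U. inner v (w - x) \<ge> 0}) / real (card U)) ` sphere 0 1)"

definition is_optimal_transport :: "'a::euclidean_space set \<Rightarrow> 'a set \<Rightarrow> ('a \<Rightarrow> 'a) \<Rightarrow> bool" where
  "is_optimal_transport U Z T \<longleftrightarrow>
     bij_betw T U Z \<and>
     (\<forall>S. bij_betw S U Z \<longrightarrow>
        (\<Sum>u\<in>U. (norm (T u - u))\<^sup>2) / real (card U) \<le> (\<Sum>u\<in>U. (norm (S u - u))\<^sup>2) / real (card U))"

definition Q_set :: "nat \<Rightarrow> nat \<Rightarrow> 'a set \<Rightarrow> 'a set set" where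
  "Q_set l n X = {Z. finite Z \<and> card Z = n \<and> l \<le> n \<and> card (Z \<inter> X) = n - l}"

end

theory Submission
  imports Defs
begin

text \<open>
  Swapping two targets of an optimal bijection cannot lower the cost, so optimal transport is
  monotone: \<open>\<langle>T a - T b, a - b\<rangle> \<ge> 0\<close>. Let \<open>z = T u\<^sub>i\<close> lie outside the bounded set \<open>X\<close>. The \<open>n - \<ell>\<close>
  points of \<open>U\<close> sent into \<open>X\<close>, together with \<open>u\<^sub>i\<close>, are \<open>n - \<ell> + 1\<close> points of \<open>U\<close>; since the depth
  bound says every closed halfspace \<open>\<langle>v, w - u\<^sub>i\<rangle> \<le> 0\<close> holds at most \<open>n - \<ell>\<close> points of \<open>U\<close>, one of
  them, \<open>w\<close>, satisfies \<open>\<langle>z/|z|, w - u\<^sub>i\<rangle> \<ge> d\<close> for a margin \<open>d > 0\<close> obtained by compactness of the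
  sphere and finiteness of \<open>U\<close>. Monotonicity gives \<open>\<langle>z, w - u\<^sub>i\<rangle> \<le> \<langle>T w, w - u\<^sub>i\<rangle>\<close>, which is
  bounded because \<open>T w \<in> X\<close>, hence \<open>|z| d\<close> is bounded.
\<close>

lemma continuous_on_Max_image:
  fixes f :: "'b \<Rightarrow> 'a::topological_space \<Rightarrow> real"
  assumes "finite S" "S \<noteq> {}" "\<And>w. w \<in> S \<Longrightarrow> continuous_on A (f w)"
  shows "continuous_on A (\<lambda>v. Max ((\<lambda>w. f w v) ` S))"
  using assms
proof (induction S rule: finite_ne_induct)
  case (singleton x)
  then show ?case by simp
next
  case (insert x F)
  have "(\<lambda>v. Max ((\<lambda>w. f w v) ` insert x F)) = (\<lambda>v. max (f x v) (Max ((\<lambda>w. f w v) ` F)))"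
    using insert by (auto intro!: ext)
  then show ?case using insert by (auto intro!: continuous_on_max)
qed

lemma bij_betw_card_preimage:
  assumes "bij_betw T U Z"
  shows "card {u \<in> U. T u \<in> X} = card (Z \<inter> X)"
proof -
  have "T ` {u \<in> U. T u \<in> X} = Z \<inter> X"
    using assms unfolding bij_betw_def by auto
  moreover have "inj_on T {u \<in> U. T u \<in> X}"
    using assms unfolding bij_betw_def by (auto intro: inj_on_subset)
  ultimately show ?thesis by (metis card_image)
qed

lemma card_closed_halfspace_le_of_lower_tukey_depth:
  fixes U :: "'a::euclidean_space set"
  assumes "finite U" "card U = n" "n > 0"
    and "lower_tukey_depth u U > real l / real n"
    and "v \<in> sphere 0 1"
  shows "card {w \<in> U. inner v (w - u) \<le> 0} + l \<le> n"
proof -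
  let ?c = "\<lambda>v. real (card {w \<in> U. inner v (w - u) \<ge> 0}) / real n"
  let ?k = "card {w \<in> U. inner v (w - u) \<le> 0}"
  have "?c ` sphere 0 1 \<subseteq> (\<lambda>k. real k / real n) ` {0..n}"
    using assms(1,2) by (auto intro!: imageI card_mono)
  then have "finite (?c ` sphere 0 1)"
    by (rule finite_subset) simp
  moreover have "-v \<in> sphere 0 1" using assms(5) by simp
  ultimately have "?c (-v) \<le> Max (?c ` sphere 0 1)" by (intro Max_ge) blast+
  moreover have "{w \<in> U. inner (-v) (w - u) \<ge> 0} = {w \<in> U. inner v (w - u) \<le> 0}" by auto
  ultimately have "real ?k / real n \<le> Max (?c ` sphere 0 1)" by simp
  with assms(2,4) have "real l / real n < (real n + 1 - real ?k) / real n"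
    unfolding lower_tukey_depth_def by (simp add: diff_divide_distrib)
  then have "real l < real n + 1 - real ?k"
    using assms(3) by (simp add: divide_less_cancel)
  then show ?thesis by linarith
qed

lemma optimal_transport_monotone:
  fixes U :: "'a::euclidean_space set"
  assumes "finite U" "is_optimal_transport U Z T" "a \<in> U" "b \<in> U" "a \<noteq> b"
  shows "inner (T a - T b) (a - b) \<ge> 0"
proof -
  let ?S = "T \<circ> Transposition.transpose a b"
  have "bij_betw (Transposition.transpose a b) U U"
    using assms(3,4) by simp
  moreover have "bij_betw T U Z" using assms(2) unfolding is_optimal_transport_def by blast
  ultimately have "bij_betw ?S U Z" by (rule bij_betw_trans)
  then have "(\<Sum>u\<in>U. (norm (T u - u))\<^sup>2) / real (card U) \<le> (\<Sum>u\<in>U. (norm (?S u - u))\<^sup>2) / real (card U)"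
    using assms(2) unfolding is_optimal_transport_def by blast
  moreover have "real (card U) > 0" using assms(1,3) card_gt_0_iff by fastforce
  ultimately have cost_le: "(\<Sum>u\<in>U. (norm (T u - u))\<^sup>2) \<le> (\<Sum>u\<in>U. (norm (?S u - u))\<^sup>2)"
    by (simp add: divide_le_cancel)
  have "(\<Sum>u\<in>U. (norm (?S u - u))\<^sup>2 - (norm (T u - u))\<^sup>2)
      = (\<Sum>u\<in>{a, b}. (norm (?S u - u))\<^sup>2 - (norm (T u - u))\<^sup>2)"
    using assms(1,3,4) by (intro sum.mono_neutral_right) (auto simp: Transposition.transpose_def)
  also have "\<dots> = (norm (T b - a))\<^sup>2 + (norm (T a - b))\<^sup>2 - (norm (T a - a))\<^sup>2 - (norm (T b - b))\<^sup>2"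
    using assms(5) by simp
  also have "\<dots> = 2 * inner (T a - T b) (a - b)"
    by (simp add: power2_norm_eq_inner inner_diff_left inner_diff_right inner_commute algebra_simps)
  finally show ?thesis
    using cost_le by (simp add: sum_subtractf)
qed

lemma sphere_margin_pos:
  fixes S :: "'a::euclidean_space set"
  assumes "finite S" "\<forall>v\<in>sphere 0 1. \<exists>w\<in>S. 0 < inner v (w - u)"
  shows "\<exists>d>0. \<forall>v\<in>sphere 0 1. \<exists>w\<in>S. d \<le> inner v (w - u)"
proof -
  define f where "f v = Max ((\<lambda>w. inner v (w - u)) ` S)" for v :: 'a
  have "sphere (0::'a) 1 \<noteq> {}" by simp
  then have "S \<noteq> {}" using assms(2) by blast
  then have f_attained: "f v \<in> (\<lambda>w. inner v (w - u)) ` S" for v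
    unfolding f_def using assms(1) by (intro Max_in) auto
  have "continuous_on (sphere 0 1) f"
    unfolding f_def using assms(1) \<open>S \<noteq> {}\<close>
    by (intro continuous_on_Max_image) (auto intro!: continuous_intros)
  then obtain v0 where v0: "v0 \<in> sphere 0 1" "\<forall>v\<in>sphere 0 1. f v0 \<le> f v"
    using continuous_attains_inf[OF compact_sphere \<open>sphere (0::'a) 1 \<noteq> {}\<close>] by blast
  obtain w0 where "w0 \<in> S" "0 < inner v0 (w0 - u)" using assms(2) v0(1) by blast
  moreover have "inner v0 (w0 - u) \<le> f v0"
    unfolding f_def using assms(1) \<open>w0 \<in> S\<close> by (intro Max_ge) auto
  ultimately have "f v0 > 0" by linarith
  moreover have "\<exists>w\<in>S. f v0 \<le> inner v (w - u)" if "v \<in> sphere 0 1" for v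
    using f_attained[of v] v0(2) that by force
  ultimately show ?thesis by blast
qed

lemma uniform_sphere_margin_of_card_closed_halfspace_less:
  fixes U :: "'a::euclidean_space set"
  assumes "finite U" "\<forall>v\<in>sphere 0 1. card {w \<in> U. inner v (w - u) \<le> 0} < k"
  shows "\<exists>d>0. \<forall>S. S \<subseteq> U \<and> k \<le> card S \<longrightarrow> (\<forall>v\<in>sphere 0 1. \<exists>w\<in>S. d \<le> inner v (w - u))"
proof -
  let ?margin = "\<lambda>S d. \<forall>v\<in>sphere 0 1. \<exists>w\<in>S. d \<le> inner v (w - u)"
  have margin_eventually: "eventually (\<lambda>d. ?margin S d) (at_right 0)"
    if S: "S \<subseteq> U" "k \<le> card S" for S
  proof -
    have "finite S" using S(1) assms(1) by (rule finite_subset)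
    have "\<exists>w\<in>S. 0 < inner v (w - u)" if v: "v \<in> sphere 0 1" for v
    proof (rule ccontr)
      assume "\<not> ?thesis"
      then have "S \<subseteq> {w \<in> U. inner v (w - u) \<le> 0}" using S(1) by auto
      then have "card S \<le> card {w \<in> U. inner v (w - u) \<le> 0}"
        using assms(1) by (intro card_mono) auto
      moreover have "card {w \<in> U. inner v (w - u) \<le> 0} < k" using assms(2) v by blast
      ultimately show False using S(2) by linarith
    qed
    then obtain e where "e > 0" and margin_e: "?margin S e"
      using sphere_margin_pos[OF \<open>finite S\<close>] by blast
    have "?margin S d" if "d \<le> e" for d
    proof
      fix v :: 'a assume "v \<in> sphere 0 1"
      then obtain w where "w \<in> S" "e \<le> inner v (w - u)" using margin_e by blast
      with that show "\<exists>w\<in>S. d \<le> inner v (w - u)" by (intro bexI[of _ w]) auto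
    qed
    then show ?thesis
      unfolding eventually_at_right_field using \<open>e > 0\<close> by (intro exI[of _ e]) auto
  qed
  have "finite {S. S \<subseteq> U \<and> k \<le> card S}"
    by (rule finite_subset[of _ "Pow U"]) (auto simp: assms(1))
  then have "eventually (\<lambda>d. \<forall>S\<in>{S. S \<subseteq> U \<and> k \<le> card S}. ?margin S d) (at_right 0)"
    by (rule eventually_ball_finite) (use margin_eventually in blast)
  then have "eventually (\<lambda>d. 0 < d \<and> (\<forall>S\<in>{S. S \<subseteq> U \<and> k \<le> card S}. ?margin S d)) (at_right 0)"
    by (rule eventually_conj[OF eventually_at_right_less])
  then obtain d where "0 < d" "\<forall>S\<in>{S. S \<subseteq> U \<and> k \<le> card S}. ?margin S d"
    using eventually_happens'[OF trivial_limit_at_right_real] by blast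
  then show ?thesis by blast
qed

lemma optimal_transport_norm_mult_le:
  fixes U :: "'a::euclidean_space set"
  assumes "finite U" "is_optimal_transport U Z T" "u \<in> U" "P \<subseteq> U" "d > 0"
    and "\<forall>v\<in>sphere 0 1. \<exists>w\<in>insert u P. d \<le> inner v (w - u)"
    and "\<forall>w\<in>P. norm (T w) \<le> B" "\<forall>w\<in>P. norm (w - u) \<le> D"
  shows "norm (T u) * d \<le> B * D"
proof -
  have "sphere (0::'a) 1 \<noteq> {}" by simp
  then obtain e :: 'a where "e \<in> sphere 0 1" by blast
  define v where "v = (if T u = 0 then e else sgn (T u))"
  have "v \<in> sphere 0 1"
    unfolding v_def using \<open>e \<in> sphere 0 1\<close> by (auto simp: norm_sgn)
  then obtain w where w: "w \<in> insert u P" "d \<le> inner v (w - u)" using assms(6) by blast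
  with assms(5) have "w \<in> P" "w \<noteq> u" by auto
  have "T u = norm (T u) *\<^sub>R v" unfolding v_def by (simp add: sgn_div_norm)
  then have "norm (T u) * d \<le> inner (T u) (w - u)"
    using w(2) by (metis inner_scaleR_left mult_left_mono norm_ge_zero)
  also have "\<dots> \<le> inner (T w) (w - u)"
    using optimal_transport_monotone[OF assms(1,2,3), of w] \<open>w \<in> P\<close> \<open>w \<noteq> u\<close> assms(4)
    by (auto simp: inner_diff_left inner_diff_right algebra_simps)
  also have "\<dots> \<le> norm (T w) * norm (w - u)" by (rule norm_cauchy_schwarz)
  also have "\<dots> \<le> B * D"
    using assms(7,8) \<open>w \<in> P\<close> by (intro mult_mono) (auto intro: order_trans[OF norm_ge_zero])
  finally show ?thesis .
qed

lemma optimal_transport_norm_le_of_margin: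
  fixes U :: "'a::euclidean_space set"
  assumes "finite U" "is_optimal_transport U Z T" "u \<in> U" "d > 0"
    and "\<forall>S. S \<subseteq> U \<and> card (Z \<inter> X) + 1 \<le> card S \<longrightarrow> (\<forall>v\<in>sphere 0 1. \<exists>w\<in>S. d \<le> inner v (w - u))"
    and "\<forall>x\<in>X. norm x \<le> B" "\<forall>w\<in>U. norm (w - u) \<le> D"
  shows "norm (T u) \<le> max B (B * D / d)"
proof (cases "T u \<in> X")
  case True
  then show ?thesis using assms(6) by fastforce
next
  case False
  define P where "P = {w \<in> U. T w \<in> X}"
  have "bij_betw T U Z" using assms(2) unfolding is_optimal_transport_def by blast
  then have "card P = card (Z \<inter> X)"
    unfolding P_def by (rule bij_betw_card_preimage)
  moreover have "finite P" "P \<subseteq> U" "u \<notin> P" "\<forall>w\<in>P. norm (T w) \<le> B"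
    using assms(1,6) False unfolding P_def by auto
  ultimately have "insert u P \<subseteq> U" "card (Z \<inter> X) + 1 \<le> card (insert u P)"
    using assms(3) by auto
  then have "\<forall>v\<in>sphere 0 1. \<exists>w\<in>insert u P. d \<le> inner v (w - u)"
    using assms(5) by blast
  then have "norm (T u) * d \<le> B * D"
    using optimal_transport_norm_mult_le[OF assms(1-3) \<open>P \<subseteq> U\<close> assms(4)]
      \<open>\<forall>w\<in>P. norm (T w) \<le> B\<close> \<open>P \<subseteq> U\<close> assms(7) by blast
  then have "norm (T u) \<le> B * D / d" using assms(4) by (simp add: pos_le_divide_eq)
  then show ?thesis by linarith
qed

theorem mainTheorem10:
  fixes X U :: "'a::euclidean_space set" and n l :: nat and ui :: 'a
  assumes "finite X" "card X = n" "finite U" "card U = n"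
    and "ui \<in> U"
    and "lower_tukey_depth ui U > real l / real n"
  shows "\<exists>R>0. \<forall>Z\<in>Q_set l n X. \<forall>T. is_optimal_transport U Z T \<longrightarrow> T ui \<in> cball 0 R"
proof -
  have "n > 0" using assms(3,4,5) card_gt_0_iff by blast
  have "card {w \<in> U. inner v (w - ui) \<le> 0} < n - l + 1" if "v \<in> sphere 0 1" for v
    using card_closed_halfspace_le_of_lower_tukey_depth[OF assms(3,4) \<open>n > 0\<close> assms(6) that]
    by linarith
  then obtain d where d: "d > 0"
    "\<forall>S. S \<subseteq> U \<and> n - l + 1 \<le> card S \<longrightarrow> (\<forall>v\<in>sphere 0 1. \<exists>w\<in>S. d \<le> inner v (w - ui))"
    using uniform_sphere_margin_of_card_closed_halfspace_less[OF assms(3)] by blast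
  obtain B where B: "B > 0" "\<forall>x\<in>X. norm x \<le> B"
    using finite_imp_bounded[OF assms(1)] unfolding bounded_pos by blast
  obtain D where D: "\<forall>w\<in>U. norm (w - ui) \<le> D"
    using finite_imp_bounded[OF finite_imageI[OF assms(3)], of "\<lambda>w. w - ui"]
    unfolding bounded_pos by auto
  have "norm (T ui) \<le> max B (B * D / d)" if "Z \<in> Q_set l n X" "is_optimal_transport U Z T" for Z T
  proof (rule optimal_transport_norm_le_of_margin[OF assms(3) that(2) assms(5) d(1) _ B(2) D])
    have "card (Z \<inter> X) = n - l" "l \<le> n" using that(1) unfolding Q_set_def by auto
    then show "\<forall>S. S \<subseteq> U \<and> card (Z \<inter> X) + 1 \<le> card S \<longrightarrow>
        (\<forall>v\<in>sphere 0 1. \<exists>w\<in>S. d \<le> inner v (w - ui))"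
      using d(2) by simp
  qed
  then show ?thesis using B(1) by (intro exI[of _ "max B (B * D / d)"]) auto
qed

end
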